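(* Let $P$ be a finite nonempty poset. Then: (i) there exists a labeling $\epsilon:E(P)\to\{-1,1\}$ (induced by a bijection $\omega:P\to\{1,\dots,p\}$) such that $P$ is $\epsilon$-consistent if and only if $P$ is parity consistent; (ii) there exists a labeling $\epsilon:E(P)\to\{-1,1\}$ (induced by a bijection $\omega:P\to\{1,\dots,p\}$) such that $P$ is $\epsilon$-graded if and only if $P$ is parity graded. Moreover, the labeling $\epsilon$ can be chosen so that the corresponding rank function has values in $\{0,1\}$.
   Context: Let $p=|P|$. Write $x\prec y$ if $y$ covers $x$ and $E(P)=\{(x,y):x\prec y\}$. A bijection $\omega:P\to\{1,\dots,p\}$ induces $\epsilon:E(P)\to\{-1,1\}$ with $\epsilon(x,y)=1$ if $\omega(x)<\omega(y)$ and $-1$ otherwise. $P$ is $\epsilon$-graded if $\sum_{i=1}^n\epsilon(x_{i-1},x_i)$ is the same for every maximal chain $x_0\prec\cdots\prec x_n$ of $P$. $P$ is $\epsilon$-consistent if for every $y\in P$ the principal order ideal $\Lambda_y=\{x\in P:x\le y\}$ is $\epsilon_y$-graded, where $\epsilon_y$ is the restriction of $\epsilon$ to $E(\Lambda_y)$; the rank function is then $\rho(y)=$ the common value of these sums for $\Lambda_y$ (i.e. the $\epsilon$-weight of any saturated chain from a minimal element to $y$). A poset is parity graded if all maximal chains have sizes of the same parity, and parity consistent if every principal order ideal $\Lambda_x$ is parity graded. *)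

theory Defs
  imports Main
begin

definition poset_on :: "'a set \<Rightarrow> ('a \<Rightarrow> 'a \<Rightarrow> bool) \<Rightarrow> bool" where
  "poset_on P leq \<longleftrightarrow>
     (\<forall>x\<in>P. leq x x) \<and>
     (\<forall>x\<in>P. \<forall>y\<in>P. leq x y \<and> leq y x \<longrightarrow> x = y) \<and>
     (\<forall>x\<in>P. \<forall>y\<in>P. \<forall>z\<in>P. leq x y \<and> leq y z \<longrightarrow> leq x z)"

definition pless :: "('a \<Rightarrow> 'a \<Rightarrow> bool) \<Rightarrow> 'a \<Rightarrow> 'a \<Rightarrow> bool" where
  "pless leq x y \<longleftrightarrow> leq x y \<and> x \<noteq> y"

definition covers :: "'a set \<Rightarrow> ('a \<Rightarrow> 'a \<Rightarrow> bool) \<Rightarrow> 'a \<Rightarrow> 'a \<Rightarrow> bool" where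
  "covers S leq x y \<longleftrightarrow> x \<in> S \<and> y \<in> S \<and> pless leq x y \<and>
     \<not> (\<exists>z\<in>S. pless leq x z \<and> pless leq z y)"

definition maximal_chain :: "'a set \<Rightarrow> ('a \<Rightarrow> 'a \<Rightarrow> bool) \<Rightarrow> 'a list \<Rightarrow> bool" where
  "maximal_chain S leq c \<longleftrightarrow> c \<noteq> [] \<and> set c \<subseteq> S \<and>
     (\<forall>i. Suc i < length c \<longrightarrow> covers S leq (c ! i) (c ! Suc i)) \<and>
     \<not> (\<exists>z\<in>S. pless leq z (hd c)) \<and>
     \<not> (\<exists>z\<in>S. pless leq (last c) z)"

definition eps :: "('a \<Rightarrow> nat) \<Rightarrow> 'a \<Rightarrow> 'a \<Rightarrow> int" where
  "eps \<omega> x y = (if \<omega> x < \<omega> y then 1 else -1)"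

definition chain_weight :: "('a \<Rightarrow> nat) \<Rightarrow> 'a list \<Rightarrow> int" where
  "chain_weight \<omega> c = (\<Sum>i<length c - 1. eps \<omega> (c ! i) (c ! Suc i))"

definition eps_graded :: "'a set \<Rightarrow> ('a \<Rightarrow> 'a \<Rightarrow> bool) \<Rightarrow> ('a \<Rightarrow> nat) \<Rightarrow> bool" where
  "eps_graded S leq \<omega> \<longleftrightarrow>
     (\<forall>c d. maximal_chain S leq c \<and> maximal_chain S leq d \<longrightarrow>
        chain_weight \<omega> c = chain_weight \<omega> d)"

definition down_set :: "'a set \<Rightarrow> ('a \<Rightarrow> 'a \<Rightarrow> bool) \<Rightarrow> 'a \<Rightarrow> 'a set" where
  "down_set P leq y = {x\<in>P. leq x y}"

definition eps_consistent :: "'a set \<Rightarrow> ('a \<Rightarrow> 'a \<Rightarrow> bool) \<Rightarrow> ('a \<Rightarrow> nat) \<Rightarrow> bool" where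
  "eps_consistent P leq \<omega> \<longleftrightarrow> (\<forall>y\<in>P. eps_graded (down_set P leq y) leq \<omega>)"

text \<open>Rank function: \<rho>(y) is the \<epsilon>-weight of any maximal chain of \<Lambda>_y
  (i.e. any saturated chain from a minimal element to y); well defined under consistency.\<close>
definition rank :: "'a set \<Rightarrow> ('a \<Rightarrow> 'a \<Rightarrow> bool) \<Rightarrow> ('a \<Rightarrow> nat) \<Rightarrow> 'a \<Rightarrow> int" where
  "rank P leq \<omega> y = chain_weight \<omega> (SOME c. maximal_chain (down_set P leq y) leq c)"

definition parity_graded :: "'a set \<Rightarrow> ('a \<Rightarrow> 'a \<Rightarrow> bool) \<Rightarrow> bool" where
  "parity_graded S leq \<longleftrightarrow>
     (\<forall>c d. maximal_chain S leq c \<and> maximal_chain S leq d \<longrightarrow>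
        even (length c) = even (length d))"

definition parity_consistent :: "'a set \<Rightarrow> ('a \<Rightarrow> 'a \<Rightarrow> bool) \<Rightarrow> bool" where
  "parity_consistent P leq \<longleftrightarrow> (\<forall>x\<in>P. parity_graded (down_set P leq x) leq)"

end

theory Submission
  imports Defs
begin

text \<open>
  Every edge label is \<open>\<plusminus>1\<close>, so the weight of a chain with \<open>n\<close> elements is congruent
  to \<open>n - 1\<close> modulo 2: being graded (consistent) for some labelling forces being parity
  graded (consistent). Conversely, in a parity consistent poset let \<open>r x \<in> {0, 1}\<close> be the
  parity of the rank of \<open>x\<close>, read off any saturated chain from a minimal element to \<open>x\<close>.
  It vanishes on minimal elements and flips along every cover, so numbering the elements
  with \<open>r = 0\<close> before those with \<open>r = 1\<close> makes the label of each cover \<open>x \<prec> y\<close> equal to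
  \<open>r y - r x\<close>. Weights then telescope: the labelling is consistent with rank function \<open>r\<close>.
  A parity graded poset is parity consistent (extend chains ending at \<open>x\<close> up to a maximal
  element), and its maximal chains then have weights in \<open>{0, 1}\<close> of one common parity,
  hence equal weights.
\<close>

lemma chain_weight_singleton [simp]: "chain_weight \<omega> [x] = 0"
  by (simp add: chain_weight_def)

lemma chain_weight_Cons_Cons [simp]:
  "chain_weight \<omega> (x # y # xs) = eps \<omega> x y + chain_weight \<omega> (y # xs)"
  unfolding chain_weight_def by (simp add: sum.lessThan_Suc_shift del: sum.lessThan_Suc)

lemma odd_chain_weight_add_length:
  "c \<noteq> [] \<Longrightarrow> odd (chain_weight \<omega> c + int (length c))"
  by (induction c rule: induct_list012) (auto simp: eps_def)

lemma chain_weight_telescope: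
  assumes "successively R c" and "c \<noteq> []"
    and "\<And>x y. R x y \<Longrightarrow> eps \<omega> x y = r y - r x"
  shows "chain_weight \<omega> c = r (last c) - r (hd c)"
  using assms by (induction c rule: induct_list012) auto

lemma eps_graded_imp_parity_graded:
  assumes "eps_graded S leq \<omega>"
  shows "parity_graded S leq"
  unfolding parity_graded_def
proof (intro allI impI)
  fix c d
  assume cd: "maximal_chain S leq c \<and> maximal_chain S leq d"
  then have "chain_weight \<omega> c = chain_weight \<omega> d"
    using assms by (simp add: eps_graded_def)
  moreover have "odd (chain_weight \<omega> c + int (length c))" "odd (chain_weight \<omega> d + int (length d))"
    using cd odd_chain_weight_add_length maximal_chain_def by blast+
  ultimately show "even (length c) = even (length d)"
    by auto
qed

lemma eps_consistent_imp_parity_consistent: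
  "eps_consistent P leq \<omega> \<Longrightarrow> parity_consistent P leq"
  unfolding eps_consistent_def parity_consistent_def
  using eps_graded_imp_parity_graded by blast

lemma eps_graded_if_parity_graded:
  assumes "parity_graded S leq"
    and weights: "\<And>c. maximal_chain S leq c \<Longrightarrow> chain_weight \<omega> c \<in> {0, 1}"
  shows "eps_graded S leq \<omega>"
  unfolding eps_graded_def
proof (intro allI impI)
  fix c d
  assume cd: "maximal_chain S leq c \<and> maximal_chain S leq d"
  then have "even (length c) = even (length d)"
    using assms(1) by (simp add: parity_graded_def)
  moreover have "odd (chain_weight \<omega> c + int (length c))" "odd (chain_weight \<omega> d + int (length d))"
    using cd odd_chain_weight_add_length maximal_chain_def by blast+
  moreover have "chain_weight \<omega> c \<in> {0, 1}" "chain_weight \<omega> d \<in> {0, 1}"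
    using cd weights by blast+
  ultimately show "chain_weight \<omega> c = chain_weight \<omega> d"
    by auto
qed

lemma exists_numbering_true_before_false:
  assumes "finite A"
  shows "\<exists>\<omega>. bij_betw \<omega> A {1..card A} \<and> (\<forall>x\<in>A. \<forall>y\<in>A. Q x \<and> \<not> Q y \<longrightarrow> \<omega> x < \<omega> y)"
proof -
  define B C where "B = {x\<in>A. Q x}" and "C = {x\<in>A. \<not> Q x}"
  have "finite B" "finite C" "A = B \<union> C" "B \<inter> C = {}"
    using assms by (auto simp: B_def C_def)
  then have card_A: "card A = card B + card C"
    by (simp add: card_Un_disjoint)
  obtain f where f: "bij_betw f B {1..card B}"
    using finite_same_card_bij[OF \<open>finite B\<close>, of "{1..card B}"] by auto
  obtain g where g: "bij_betw g C {card B + 1..card B + card C}"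
    using finite_same_card_bij[OF \<open>finite C\<close>, of "{card B + 1..card B + card C}"] by auto
  define \<omega> where "\<omega> x = (if Q x then f x else g x)" for x
  have \<omega>B: "bij_betw \<omega> B {1..card B}"
    using f by (rule bij_betw_cong[THEN iffD1, rotated]) (simp add: \<omega>_def B_def)
  have \<omega>C: "bij_betw \<omega> C {card B + 1..card B + card C}"
    using g by (rule bij_betw_cong[THEN iffD1, rotated]) (simp add: \<omega>_def C_def)
  have "bij_betw \<omega> (B \<union> C) ({1..card B} \<union> {card B + 1..card B + card C})"
    by (rule bij_betw_combine[OF \<omega>B \<omega>C]) auto
  moreover have "{1..card B} \<union> {card B + 1..card B + card C} = {1..card A}"
    using card_A by auto
  ultimately have "bij_betw \<omega> A {1..card A}"
    using \<open>A = B \<union> C\<close> by simp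
  moreover have "\<omega> x < \<omega> y" if "x \<in> B" "y \<in> C" for x y
  proof -
    have "\<omega> x \<le> card B" "card B + 1 \<le> \<omega> y"
      using bij_betwE[OF \<omega>B] bij_betwE[OF \<omega>C] that by auto
    then show ?thesis by simp
  qed
  ultimately show ?thesis
    unfolding B_def C_def by blast
qed

definition minimal_in :: "'a set \<Rightarrow> ('a \<Rightarrow> 'a \<Rightarrow> bool) \<Rightarrow> 'a \<Rightarrow> bool" where
  "minimal_in S leq x \<longleftrightarrow> x \<in> S \<and> (\<forall>z\<in>S. \<not> pless leq z x)"

definition maximal_in :: "'a set \<Rightarrow> ('a \<Rightarrow> 'a \<Rightarrow> bool) \<Rightarrow> 'a \<Rightarrow> bool" where
  "maximal_in S leq x \<longleftrightarrow> x \<in> S \<and> (\<forall>z\<in>S. \<not> pless leq x z)"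

definition saturated_chain :: "'a set \<Rightarrow> ('a \<Rightarrow> 'a \<Rightarrow> bool) \<Rightarrow> 'a list \<Rightarrow> bool" where
  "saturated_chain S leq c \<longleftrightarrow> c \<noteq> [] \<and> set c \<subseteq> S \<and> successively (covers S leq) c"

lemma maximal_chain_iff_saturated_chain:
  "maximal_chain S leq c \<longleftrightarrow>
     saturated_chain S leq c \<and> minimal_in S leq (hd c) \<and> maximal_in S leq (last c)"
  by (auto simp: maximal_chain_def saturated_chain_def minimal_in_def maximal_in_def
      successively_conv_nth)

lemma saturated_chain_singleton [simp]: "saturated_chain S leq [x] \<longleftrightarrow> x \<in> S"
  by (simp add: saturated_chain_def)

lemma saturated_chain_hd_in: "saturated_chain S leq c \<Longrightarrow> hd c \<in> S"
  and saturated_chain_last_in: "saturated_chain S leq c \<Longrightarrow> last c \<in> S"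
  unfolding saturated_chain_def using hd_in_set last_in_set by blast+

lemma saturated_chain_snoc:
  "saturated_chain S leq c \<Longrightarrow> covers S leq (last c) y \<Longrightarrow> saturated_chain S leq (c @ [y])"
  by (auto simp: saturated_chain_def successively_append_iff covers_def)

lemma saturated_chain_join:
  assumes "saturated_chain S leq c" and "saturated_chain S leq u" and "last c = hd u"
  shows "saturated_chain S leq (butlast c @ u)"
    and "hd (butlast c @ u) = hd c" and "last (butlast c @ u) = last u"
proof -
  obtain c' where c: "c = c' @ [hd u]"
    using assms(1,3) unfolding saturated_chain_def by (metis append_butlast_last_id)
  have "set c' \<subseteq> S" "successively (covers S leq) c'"
    "c' \<noteq> [] \<Longrightarrow> covers S leq (last c') (hd u)"
    using assms(1) by (auto simp: saturated_chain_def c successively_append_iff)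
  then show "saturated_chain S leq (butlast c @ u)"
    using assms(2) by (auto simp: saturated_chain_def c successively_append_iff)
  show "hd (butlast c @ u) = hd c"
    by (cases c') (auto simp: c)
  show "last (butlast c @ u) = last u"
    using assms(2) by (simp add: saturated_chain_def)
qed

lemma pless_converse [simp]: "pless leq\<inverse>\<inverse> x y \<longleftrightarrow> pless leq y x"
  by (auto simp: pless_def)

lemma covers_converse [simp]: "covers S leq\<inverse>\<inverse> x y \<longleftrightarrow> covers S leq y x"
  by (auto simp: covers_def)

lemma minimal_in_converse [simp]: "minimal_in S leq\<inverse>\<inverse> x \<longleftrightarrow> maximal_in S leq x"
  by (simp add: minimal_in_def maximal_in_def)

lemma saturated_chain_converse [simp]:
  "saturated_chain S leq\<inverse>\<inverse> c \<longleftrightarrow> saturated_chain S leq (rev c)"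
  by (simp add: saturated_chain_def)

locale finite_poset =
  fixes P :: "'a set" and leq :: "'a \<Rightarrow> 'a \<Rightarrow> bool"
  assumes finite: "finite P" and poset: "poset_on P leq"
begin

lemma leq_refl: "x \<in> P \<Longrightarrow> leq x x"
  using poset unfolding poset_on_def by blast

lemma leq_antisym: "x \<in> P \<Longrightarrow> y \<in> P \<Longrightarrow> leq x y \<Longrightarrow> leq y x \<Longrightarrow> x = y"
  using poset unfolding poset_on_def by blast

lemma leq_trans: "x \<in> P \<Longrightarrow> y \<in> P \<Longrightarrow> z \<in> P \<Longrightarrow> leq x y \<Longrightarrow> leq y z \<Longrightarrow> leq x z"
  using poset unfolding poset_on_def by blast

lemma asymp_on_pless: "asymp_on P (pless leq)"
  by (rule asymp_onI) (auto simp: pless_def dest: leq_antisym)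

lemma transp_on_pless: "transp_on P (pless leq)"
proof (rule transp_onI)
  fix x y z
  assume "x \<in> P" "y \<in> P" "z \<in> P" "pless leq x y" "pless leq y z"
  then show "pless leq x z"
    using leq_trans[of x y z] leq_antisym[of x y] by (auto simp: pless_def)
qed

lemma finite_poset_converse: "finite_poset P leq\<inverse>\<inverse>"
  using finite poset unfolding finite_poset_def poset_on_def conversep_iff by blast

lemma exists_cover_below:
  assumes "x \<in> P" and "\<not> minimal_in P leq x"
  obtains z where "covers P leq z x"
proof -
  have "\<exists>z\<in>P. pless leq z x \<and> (\<forall>y\<in>P. pless leq z y \<longrightarrow> \<not> pless leq y x)"
    using Finite_Set.bex_max_element_with_property[OF finite asymp_on_pless transp_on_pless,
        of "\<lambda>z. pless leq z x"] assms
    by (auto simp: minimal_in_def)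
  then show ?thesis
    using that assms(1) by (auto simp: covers_def)
qed

lemma exists_saturated_chain_from_minimal:
  assumes "x \<in> P"
  obtains c where "saturated_chain P leq c" "minimal_in P leq (hd c)" "last c = x"
proof -
  have "wfp_on P (pless leq)"
    by (rule strict_partial_order_wfp_on_finite_set[OF transp_on_pless asymp_on_pless finite])
  then have "\<exists>c. saturated_chain P leq c \<and> minimal_in P leq (hd c) \<and> last c = x"
    using assms
  proof (induction rule: wfp_on_induct[consumes 2, case_names less])
    case (less x)
    show ?case
    proof (cases "minimal_in P leq x")
      case True
      then show ?thesis
        using less.hyps by (intro exI[of _ "[x]"]) simp
    next
      case False
      then obtain z where z: "covers P leq z x"
        using exists_cover_below less.hyps by blast
      then have "z \<in> P" "pless leq z x"
        by (simp_all add: covers_def)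
      then obtain c where c: "saturated_chain P leq c" "minimal_in P leq (hd c)" "last c = z"
        using less.IH by blast
      then have "saturated_chain P leq (c @ [x])"
        using saturated_chain_snoc[OF c(1)] z c(3) by simp
      moreover have "hd (c @ [x]) = hd c"
        using c(1) by (simp add: saturated_chain_def)
      ultimately show ?thesis
        using c(2) by (intro exI[of _ "c @ [x]"]) simp
    qed
  qed
  then show ?thesis
    using that by blast
qed

lemma exists_saturated_chain_to_maximal:
  assumes "x \<in> P"
  obtains c where "saturated_chain P leq c" "hd c = x" "maximal_in P leq (last c)"
proof -
  obtain c where "saturated_chain P leq (rev c)" "maximal_in P leq (hd c)" "last c = x"
    using finite_poset.exists_saturated_chain_from_minimal[OF finite_poset_converse assms]
    by auto
  then show ?thesis
    using that[of "rev c"] by (simp add: hd_rev last_rev saturated_chain_def)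
qed

lemma covers_down_set_iff:
  assumes "y \<in> P"
  shows "covers (down_set P leq y) leq a b \<longleftrightarrow> covers P leq a b \<and> leq b y"
proof
  assume c: "covers (down_set P leq y) leq a b"
  then have ab: "a \<in> P" "b \<in> P" "leq b y" "pless leq a b"
    by (auto simp: covers_def down_set_def)
  have "z \<in> down_set P leq y" if "z \<in> P" "pless leq z b" for z
    using that ab assms leq_trans[of z b y] by (simp add: down_set_def pless_def)
  then show "covers P leq a b \<and> leq b y"
    using c ab by (auto simp: covers_def)
next
  assume c: "covers P leq a b \<and> leq b y"
  then have "leq a y"
    using assms leq_trans[of a b y] by (simp add: covers_def pless_def)
  then show "covers (down_set P leq y) leq a b"
    using c by (auto simp: covers_def down_set_def)
qed

lemma saturated_chain_le_last:
  "saturated_chain P leq c \<Longrightarrow> x \<in> set c \<Longrightarrow> leq x (last c)"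
proof (induction c arbitrary: x rule: induct_list012)
  case (2 a)
  then show ?case
    by (simp add: leq_refl)
next
  case (3 a b xs)
  then have tail: "saturated_chain P leq (b # xs)" and ab: "covers P leq a b"
    by (simp_all add: saturated_chain_def)
  have "last (b # xs) \<in> P" "leq b (last (b # xs))"
    using saturated_chain_last_in[OF tail] "3.IH"(2)[OF tail, of b] by simp_all
  then have "leq a (last (b # xs))"
    using ab leq_trans[of a b "last (b # xs)"] by (simp add: covers_def pless_def)
  then show ?case
    using "3.IH"(2)[OF tail] "3.prems"(2) by auto
qed simp

lemma saturated_chain_down_set_iff:
  assumes "y \<in> P"
  shows "saturated_chain (down_set P leq y) leq c \<longleftrightarrow> saturated_chain P leq c \<and> leq (last c) y"
proof
  assume sat: "saturated_chain (down_set P leq y) leq c"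
  then have "successively (covers P leq) c"
    using successively_mono[of "covers (down_set P leq y) leq" c "covers P leq"]
      covers_down_set_iff[OF assms]
    unfolding saturated_chain_def by blast
  moreover have "set c \<subseteq> P" "last c \<in> down_set P leq y"
    using sat saturated_chain_last_in[OF sat] by (auto simp: saturated_chain_def down_set_def)
  ultimately show "saturated_chain P leq c \<and> leq (last c) y"
    using sat by (simp add: saturated_chain_def down_set_def)
next
  assume "saturated_chain P leq c \<and> leq (last c) y"
  then have sat: "saturated_chain P leq c" and last: "leq (last c) y"
    by simp_all
  have le: "leq x y" if "x \<in> set c" for x
    using that sat last assms saturated_chain_le_last[OF sat that]
      leq_trans[of x "last c" y]
    by (simp add: saturated_chain_def subset_iff)
  have "successively (covers (down_set P leq y) leq) c"
    using successively_mono[of "covers P leq" c "covers (down_set P leq y) leq"]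
      covers_down_set_iff[OF assms] sat le
    unfolding saturated_chain_def by blast
  then show "saturated_chain (down_set P leq y) leq c"
    using sat le by (auto simp: saturated_chain_def down_set_def)
qed

lemma maximal_chain_down_set_iff:
  assumes "y \<in> P"
  shows "maximal_chain (down_set P leq y) leq c \<longleftrightarrow>
    saturated_chain P leq c \<and> minimal_in P leq (hd c) \<and> last c = y"
proof -
  have minimal: "minimal_in (down_set P leq y) leq x \<longleftrightarrow> minimal_in P leq x"
    if "x \<in> down_set P leq y" for x
    using that assms leq_trans unfolding minimal_in_def down_set_def pless_def by blast
  have maximal: "maximal_in (down_set P leq y) leq x \<longleftrightarrow> x = y"
    if "x \<in> down_set P leq y" for x
    using that assms leq_refl leq_antisym unfolding maximal_in_def down_set_def pless_def by blast
  show ?thesis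
  proof
    assume "maximal_chain (down_set P leq y) leq c"
    then have sat: "saturated_chain (down_set P leq y) leq c"
      and "minimal_in (down_set P leq y) leq (hd c)" "maximal_in (down_set P leq y) leq (last c)"
      by (simp_all add: maximal_chain_iff_saturated_chain)
    then show "saturated_chain P leq c \<and> minimal_in P leq (hd c) \<and> last c = y"
      using saturated_chain_down_set_iff[OF assms] minimal maximal
        saturated_chain_hd_in[OF sat] saturated_chain_last_in[OF sat]
      by blast
  next
    assume "saturated_chain P leq c \<and> minimal_in P leq (hd c) \<and> last c = y"
    moreover have sat: "saturated_chain (down_set P leq y) leq c"
      using calculation saturated_chain_down_set_iff[OF assms] assms leq_refl by blast
    ultimately show "maximal_chain (down_set P leq y) leq c"
      using minimal maximal saturated_chain_hd_in[OF sat] saturated_chain_last_in[OF sat]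
      by (simp add: maximal_chain_iff_saturated_chain)
  qed
qed

lemma exists_maximal_chain_down_set:
  "x \<in> P \<Longrightarrow> \<exists>c. maximal_chain (down_set P leq x) leq c"
  by (metis exists_saturated_chain_from_minimal maximal_chain_down_set_iff)

lemma maximal_chain_imp_maximal_chain_down_set:
  assumes "maximal_chain P leq c"
  shows "maximal_chain (down_set P leq (last c)) leq c"
  using assms maximal_chain_down_set_iff[of "last c" c]
  by (simp add: maximal_chain_iff_saturated_chain maximal_in_def)

lemma parity_graded_imp_parity_consistent:
  assumes "parity_graded P leq"
  shows "parity_consistent P leq"
  unfolding parity_consistent_def parity_graded_def
proof (intro ballI allI impI)
  fix x c d
  assume x: "x \<in> P"
    and cd: "maximal_chain (down_set P leq x) leq c \<and> maximal_chain (down_set P leq x) leq d"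
  obtain u where u: "saturated_chain P leq u" "hd u = x" "maximal_in P leq (last u)"
    using exists_saturated_chain_to_maximal[OF x] .
  have extend: "maximal_chain P leq (butlast e @ u)"
    if "maximal_chain (down_set P leq x) leq e" for e
  proof -
    have e: "saturated_chain P leq e" "minimal_in P leq (hd e)" "last e = x"
      using that maximal_chain_down_set_iff[OF x] by blast+
    then show ?thesis
      using saturated_chain_join[OF e(1) u(1)] u
      by (simp add: maximal_chain_iff_saturated_chain)
  qed
  have "even (length (butlast c @ u)) = even (length (butlast d @ u))"
    using assms cd extend unfolding parity_graded_def by blast
  then show "even (length c) = even (length d)"
    using cd by (auto simp: maximal_chain_def even_add)
qed

end

definition parity_rank :: "'a set \<Rightarrow> ('a \<Rightarrow> 'a \<Rightarrow> bool) \<Rightarrow> 'a \<Rightarrow> int" where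
  "parity_rank P leq x =
     (if odd (length (SOME c. maximal_chain (down_set P leq x) leq c)) then 0 else 1)"

context finite_poset
begin

context
  assumes parity_consistent: "parity_consistent P leq"
begin

lemma parity_rank_eq:
  assumes "x \<in> P" and "maximal_chain (down_set P leq x) leq c"
  shows "parity_rank P leq x = (if odd (length c) then 0 else 1)"
proof -
  let ?c = "SOME c. maximal_chain (down_set P leq x) leq c"
  have "maximal_chain (down_set P leq x) leq ?c"
    using assms(2) by (rule someI)
  then have "even (length ?c) = even (length c)"
    using parity_consistent assms unfolding parity_consistent_def parity_graded_def by blast
  then show ?thesis
    by (simp add: parity_rank_def)
qed

lemma parity_rank_minimal:
  assumes "minimal_in P leq x"
  shows "parity_rank P leq x = 0"
proof -
  have "x \<in> P"
    using assms by (simp add: minimal_in_def)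
  then have "maximal_chain (down_set P leq x) leq [x]"
    using assms maximal_chain_down_set_iff by simp
  then show ?thesis
    using parity_rank_eq \<open>x \<in> P\<close> by simp
qed

lemma parity_rank_covers:
  assumes "covers P leq x y"
  shows "parity_rank P leq y = 1 - parity_rank P leq x"
proof -
  have "x \<in> P" "y \<in> P"
    using assms by (simp_all add: covers_def)
  obtain c where c: "saturated_chain P leq c" "minimal_in P leq (hd c)" "last c = x"
    using exists_saturated_chain_from_minimal[OF \<open>x \<in> P\<close>] .
  have "maximal_chain (down_set P leq x) leq c"
    using c maximal_chain_down_set_iff[OF \<open>x \<in> P\<close>] by blast
  moreover have "maximal_chain (down_set P leq y) leq (c @ [y])"
  proof -
    have "hd (c @ [y]) = hd c"
      using c(1) by (simp add: saturated_chain_def)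
    then show ?thesis
      using c saturated_chain_snoc[OF c(1)] assms maximal_chain_down_set_iff[OF \<open>y \<in> P\<close>]
      by simp
  qed
  ultimately show ?thesis
    using parity_rank_eq \<open>x \<in> P\<close> \<open>y \<in> P\<close> by simp
qed

lemma exists_numbering_chain_weight_eq_parity_rank:
  obtains \<omega> where "bij_betw \<omega> P {1..card P}"
    and "\<And>y c. y \<in> P \<Longrightarrow> maximal_chain (down_set P leq y) leq c \<Longrightarrow>
           chain_weight \<omega> c = parity_rank P leq y"
proof -
  let ?r = "parity_rank P leq"
  obtain \<omega> where \<omega>: "bij_betw \<omega> P {1..card P}"
    and first: "\<forall>x\<in>P. \<forall>y\<in>P. ?r x = 0 \<and> ?r y \<noteq> 0 \<longrightarrow> \<omega> x < \<omega> y"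
    using exists_numbering_true_before_false[OF finite, of "\<lambda>x. ?r x = 0"] by blast
  have eps_covers: "eps \<omega> x y = ?r y - ?r x" if "covers P leq x y" for x y
  proof -
    have "x \<in> P" "y \<in> P"
      using that by (simp_all add: covers_def)
    moreover have "?r y = 1 - ?r x"
      using parity_rank_covers[OF that] .
    moreover have "?r x = 0 \<or> ?r x = 1"
      by (simp add: parity_rank_def)
    ultimately show ?thesis
      using first[rule_format, of x y] first[rule_format, of y x] by (auto simp: eps_def)
  qed
  have weight: "chain_weight \<omega> c = ?r y"
    if "y \<in> P" "maximal_chain (down_set P leq y) leq c" for y c
  proof -
    have c: "saturated_chain P leq c" "minimal_in P leq (hd c)" "last c = y"
      using that maximal_chain_down_set_iff by blast+
    then have "chain_weight \<omega> c = ?r (last c) - ?r (hd c)"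
      using eps_covers chain_weight_telescope[where R = "covers P leq"]
      by (simp add: saturated_chain_def)
    then show ?thesis
      using c parity_rank_minimal by simp
  qed
  show ?thesis
    using \<omega> weight by (rule that)
qed

lemma exists_consistent_numbering:
  "\<exists>\<omega>. bij_betw \<omega> P {1..card P} \<and> eps_consistent P leq \<omega> \<and>
     (\<forall>y\<in>P. rank P leq \<omega> y \<in> {0, 1}) \<and>
     (\<forall>c. maximal_chain P leq c \<longrightarrow> chain_weight \<omega> c \<in> {0, 1})"
proof -
  obtain \<omega> where \<omega>: "bij_betw \<omega> P {1..card P}"
    and weight: "\<And>y c. y \<in> P \<Longrightarrow> maximal_chain (down_set P leq y) leq c \<Longrightarrow>
                   chain_weight \<omega> c = parity_rank P leq y"
    using exists_numbering_chain_weight_eq_parity_rank by blast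
  have rank_01: "parity_rank P leq y \<in> {0, 1}" for y
    by (simp add: parity_rank_def)
  have "eps_consistent P leq \<omega>"
    unfolding eps_consistent_def eps_graded_def using weight by metis
  moreover have "rank P leq \<omega> y \<in> {0, 1}" if "y \<in> P" for y
    unfolding rank_def
    using weight[OF that someI_ex[OF exists_maximal_chain_down_set[OF that]]] rank_01 by simp
  moreover have "chain_weight \<omega> c \<in> {0, 1}" if "maximal_chain P leq c" for c
  proof -
    have "last c \<in> P"
      using that by (simp add: maximal_chain_iff_saturated_chain maximal_in_def)
    then show ?thesis
      using weight[OF _ maximal_chain_imp_maximal_chain_down_set[OF that]] rank_01 by simp
  qed
  ultimately show ?thesis
    using \<omega> by blast
qed

end

end

theorem theorem2p5:
  fixes P :: "'a set" and leq :: "'a \<Rightarrow> 'a \<Rightarrow> bool"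
  assumes "finite P" and "P \<noteq> {}" and "poset_on P leq"
  shows "((\<exists>\<omega>. bij_betw \<omega> P {1..card P} \<and> eps_consistent P leq \<omega>)
            \<longleftrightarrow> parity_consistent P leq)
       \<and> ((\<exists>\<omega>. bij_betw \<omega> P {1..card P} \<and> eps_graded P leq \<omega>)
            \<longleftrightarrow> parity_graded P leq)
       \<and> (parity_consistent P leq \<longrightarrow>
            (\<exists>\<omega>. bij_betw \<omega> P {1..card P} \<and> eps_consistent P leq \<omega> \<and>
                 (\<forall>y\<in>P. rank P leq \<omega> y \<in> {0, 1})))
       \<and> (parity_graded P leq \<longrightarrow>
            (\<exists>\<omega>. bij_betw \<omega> P {1..card P} \<and> eps_graded P leq \<omega> \<and>
                 (\<forall>c. maximal_chain P leq c \<longrightarrow> chain_weight \<omega> c \<in> {0, 1})))"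
proof -
  interpret finite_poset P leq
    using assms(1,3) by unfold_locales
  have graded_numbering: "\<exists>\<omega>. bij_betw \<omega> P {1..card P} \<and> eps_graded P leq \<omega> \<and>
      (\<forall>c. maximal_chain P leq c \<longrightarrow> chain_weight \<omega> c \<in> {0, 1})"
    if pg: "parity_graded P leq"
  proof -
    obtain \<omega> where "bij_betw \<omega> P {1..card P}"
      and "\<forall>c. maximal_chain P leq c \<longrightarrow> chain_weight \<omega> c \<in> {0, 1}"
      using exists_consistent_numbering[OF parity_graded_imp_parity_consistent[OF pg]] by blast
    then show ?thesis
      using eps_graded_if_parity_graded[OF pg] by blast
  qed
  show ?thesis
    using exists_consistent_numbering graded_numbering
      eps_consistent_imp_parity_consistent eps_graded_imp_parity_graded
    by blast
qed

end
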